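(* Let $\mathcal A,\mathcal B$ be nondeterministic parity tree automata over $\Sigma$ (all states productive) with $L(\mathcal A)\cap L(\mathcal B)=\emptyset$. Then there is a function $\mathcal P:\bigcup_{a\in\Sigma}\Delta^\mathcal A(a)\times\Delta^\mathcal B(a)\to\{\mathsf L,\mathsf R\}$ with the following property: for every path $b=(a_0,d_0)(a_1,d_1)\cdots\in(\Sigma\times\{\mathsf L,\mathsf R\})^\omega$ and all sequences $\vec\delta^\mathcal A=\delta^\mathcal A_0\delta^\mathcal A_1\cdots\in\Delta^\mathcal A(b)$ and $\vec\delta^\mathcal B=\delta^\mathcal B_0\delta^\mathcal B_1\cdots\in\Delta^\mathcal B(b)$, if $\mathcal P(\delta^\mathcal A_i,\delta^\mathcal B_i)=d_i$ for every $i\in\omega$, then at least one of $\vec\delta^\mathcal A$, $\vec\delta^\mathcal B$ is rejecting.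
   Context: A nondeterministic parity tree automaton $(\Sigma,Q,q_0,\Omega,\Delta)$ has $\Omega:Q\to\mathbb N$ and $\Delta\subseteq Q\times\Sigma\times Q\times Q$; it accepts a tree $t:\{\mathsf L,\mathsf R\}^*\to\Sigma$ if there is a run $\rho$ with $\rho(\epsilon)=q_0$, $(\rho(u),t(u),\rho(u\mathsf L),\rho(u\mathsf R))\in\Delta$ for all $u$, such that on every branch the maximal priority seen infinitely often is even. $L(\cdot)$ is the recognised language; all states are assumed productive (each state accepts some tree when used as initial state). $\Delta(a)$ is the set of transitions over letter $a$. The priority of a transition $(q,a,q_\mathsf L,q_\mathsf R)$ is $\Omega(q)$; an infinite sequence of transitions is accepting iff the maximal priority occurring infinitely often is even, and rejecting otherwise. For a path $b=(a_0,d_0)(a_1,d_1)\cdots$, $\Delta(b)$ is the set of sequences $\delta_0\delta_1\cdots$ with $\delta_i=(q_i,a_i,q_{\mathsf L,i},q_{\mathsf R,i})\in\Delta$, $q_0$ the initial state, and $q_{i+1}=q_{d_i,i}$ for all $i$. *)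

theory Defs
  imports Main
begin

datatype dir = L | R

text \<open>Nondeterministic parity tree automaton (Sigma, Q, q0, Omega, Delta).
  A transition (q, a, qL, qR) is a 4-tuple.\<close>
record ('a, 'q) npta =
  alph   :: "'a set"
  states :: "'q set"
  init   :: 'q
  pri    :: "'q \<Rightarrow> nat"
  trans  :: "('q \<times> 'a \<times> 'q \<times> 'q) set"

definition wf_npta :: "('a, 'q) npta \<Rightarrow> bool" where
  "wf_npta A \<longleftrightarrow> finite (alph A) \<and> finite (states A) \<and> init A \<in> states A \<and>
     trans A \<subseteq> states A \<times> alph A \<times> states A \<times> states A"

definition parity_accepting :: "(nat \<Rightarrow> nat) \<Rightarrow> bool" where
  "parity_accepting s \<longleftrightarrow>
     (\<exists>m. even m \<and> (\<exists>\<^sub>\<infinity>n. s n = m) \<and> (\<forall>k>m. \<not> (\<exists>\<^sub>\<infinity>n. s n = k)))"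

definition is_tree :: "('a, 'q) npta \<Rightarrow> (dir list \<Rightarrow> 'a) \<Rightarrow> bool" where
  "is_tree A t \<longleftrightarrow> (\<forall>u. t u \<in> alph A)"

text \<open>Tree acceptance from state q; nodes are words over {L,R} read from the root,
  a branch is an infinite direction sequence, its n-th node is the prefix of length n.\<close>
definition accepts_from :: "('a, 'q) npta \<Rightarrow> 'q \<Rightarrow> (dir list \<Rightarrow> 'a) \<Rightarrow> bool" where
  "accepts_from A q t \<longleftrightarrow>
     (\<exists>\<rho>. \<rho> [] = q \<and>
        (\<forall>u. (\<rho> u, t u, \<rho> (u @ [L]), \<rho> (u @ [R])) \<in> trans A) \<and>
        (\<forall>br :: nat \<Rightarrow> dir. parity_accepting (\<lambda>n. pri A (\<rho> (map br [0..<n])))))"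

definition lang :: "('a, 'q) npta \<Rightarrow> (dir list \<Rightarrow> 'a) set" where
  "lang A = {t. is_tree A t \<and> accepts_from A (init A) t}"

definition all_productive :: "('a, 'q) npta \<Rightarrow> bool" where
  "all_productive A \<longleftrightarrow> (\<forall>q \<in> states A. \<exists>t. is_tree A t \<and> accepts_from A q t)"

definition trans_seqs :: "('a, 'q) npta \<Rightarrow> (nat \<Rightarrow> 'a \<times> dir) \<Rightarrow> (nat \<Rightarrow> 'q \<times> 'a \<times> 'q \<times> 'q) set" where
  "trans_seqs A b = {\<delta>. (\<forall>i. \<delta> i \<in> trans A) \<and> fst (\<delta> 0) = init A \<and>
      (\<forall>i. fst (snd (\<delta> i)) = fst (b i)) \<and>
      (\<forall>i. fst (\<delta> (Suc i)) =
             (if snd (b i) = L then fst (snd (snd (\<delta> i))) else snd (snd (snd (\<delta> i)))))}"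

text \<open>Priority of a transition is the priority of its source state.\<close>
definition seq_rejecting :: "('a, 'q) npta \<Rightarrow> (nat \<Rightarrow> 'q \<times> 'a \<times> 'q \<times> 'q) \<Rightarrow> bool" where
  "seq_rejecting A \<delta> \<longleftrightarrow> \<not> parity_accepting (\<lambda>i. pri A (fst (\<delta> i)))"

end

theory Submission
  imports Defs "HOL-Library.Infinite_Set"
begin

text \<open>
  Consider the game in which Eve builds a tree together with runs of A and B on it, one node at a
  time, by proposing a pair of transitions over a common letter, and Adam answers with a direction;
  Eve wins a play if both runs satisfy their parity conditions along it. A winning strategy of Eve
  yields a tree in both languages, so Eve has none, and it suffices that Adam then has a positional
  winning strategy: it is the required function P.

  Eve's objective is closed under shuffles: the values recurring in an interleaving of two
  sequences are those recurring in either of them, so if in both every recurring priority is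
  dominated by an even recurring one, the same holds for the interleaving. Positionality of Adam
  follows by induction on the number of moves at which Adam's choice is still free. Fix such a move
  m0 and force Adam to answer L, respectively R, there. If Adam wins one of the two restricted games
  positionally we are done. Otherwise Eve has winning strategies \<sigma>1 and \<sigma>2 for them, and the
  strategy that switches between them whenever m0 is played, following Adam's direction, wins the
  less restricted game: each of its plays is a shuffle of a play of \<sigma>1 and a play of \<sigma>2.
\<close>

section \<open>Recurring values and the parity condition\<close>

definition inf_values :: "(nat \<Rightarrow> 'b) \<Rightarrow> nat set \<Rightarrow> 'b set" where
  "inf_values s S = {v. infinite {n \<in> S. s n = v}}"

definition even_dominated :: "nat set \<Rightarrow> bool" where
  "even_dominated X \<longleftrightarrow> (\<forall>v \<in> X. \<exists>w \<in> X. even w \<and> v \<le> w)"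

lemma inf_values_Un: "inf_values s (S \<union> T) = inf_values s S \<union> inf_values s T"
proof -
  have "{n \<in> S \<union> T. s n = v} = {n \<in> S. s n = v} \<union> {n \<in> T. s n = v}" for v
    by blast
  then show ?thesis
    by (auto simp: inf_values_def)
qed

lemma inf_values_finite_dom: "finite S \<Longrightarrow> inf_values s S = {}"
  by (auto simp: inf_values_def)

lemma even_dominated_empty [simp]: "even_dominated {}"
  by (simp add: even_dominated_def)

lemma even_dominated_Un: "even_dominated X \<Longrightarrow> even_dominated Y \<Longrightarrow> even_dominated (X \<union> Y)"
  unfolding even_dominated_def by blast

lemma inf_values_nonempty:
  assumes "finite (range s)"
  shows "inf_values s UNIV \<noteq> {}"
proof
  assume none: "inf_values s UNIV = {}"
  have "(UNIV :: nat set) = (\<Union>v \<in> range s. {n. s n = v})"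
    by blast
  also have "finite \<dots>"
    by (rule finite_UN_I[OF assms]) (use none in \<open>auto simp: inf_values_def\<close>)
  finally show False
    by simp
qed

lemma parity_accepting_iff_even_dominated:
  assumes "finite (range s)"
  shows "parity_accepting s \<longleftrightarrow> even_dominated (inf_values s UNIV)"
proof -
  let ?X = "inf_values s UNIV"
  have inf_iff: "(\<exists>\<^sub>\<infinity>n. s n = k) \<longleftrightarrow> k \<in> ?X" for k
    by (simp add: inf_values_def frequently_cofinite)
  have fin: "finite ?X"
    by (rule finite_subset[OF _ assms]) (auto simp: inf_values_def dest: not_finite_existsD)
  have "Max ?X \<in> ?X"
    using fin inf_values_nonempty[OF assms] by (rule Max_in)
  show ?thesis
  proof
    assume "parity_accepting s"
    then obtain m where "even m" "m \<in> ?X" "\<forall>k>m. k \<notin> ?X"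
      unfolding parity_accepting_def inf_iff by blast
    then show "even_dominated ?X"
      unfolding even_dominated_def by (meson not_le)
  next
    assume "even_dominated ?X"
    then obtain w where "w \<in> ?X" "even w" "Max ?X \<le> w"
      using \<open>Max ?X \<in> ?X\<close> unfolding even_dominated_def by blast
    moreover have "k \<le> Max ?X" if "k \<in> ?X" for k
      using fin that by simp
    ultimately show "parity_accepting s"
      unfolding parity_accepting_def inf_iff by (meson le_trans not_le)
  qed
qed

definition counts :: "nat set \<Rightarrow> (nat \<Rightarrow> nat) \<Rightarrow> bool" where
  "counts S c \<longleftrightarrow> (\<forall>n. c (Suc n) = c n + (if Suc n \<in> S then 1 else 0))"

lemma counts_mono: "counts S c \<Longrightarrow> n \<le> m \<Longrightarrow> c n \<le> c m"
  by (rule lift_Suc_mono_le[of c]) (simp_all add: counts_def)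

lemma counts_less:
  assumes "counts S c" "n < m" "m \<in> S"
  shows "c n < c m"
proof -
  obtain k where m: "m = Suc k" and "n \<le> k"
    using assms(2) by (cases m) auto
  then have "c n \<le> c k"
    using counts_mono[OF assms(1)] by blast
  also have "c k < c m"
    using assms(1,3) m by (simp add: counts_def)
  finally show ?thesis .
qed

lemma counts_unbounded:
  assumes "counts S c" "infinite S"
  shows "\<exists>n. j \<le> c n"
proof (induction j)
  case (Suc j)
  then obtain n where "j \<le> c n" by blast
  moreover obtain m where "m \<in> S" "n < m"
    using \<open>infinite S\<close> infinite_nat_iff_unbounded by blast
  moreover have "c n < c m"
    using counts_less[OF assms(1)] \<open>m \<in> S\<close> \<open>n < m\<close> by blast
  ultimately have "Suc j \<le> c m"
    by simp
  then show ?case by blast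
qed simp

lemma counts_surj:
  assumes "counts S c" "infinite S" "c 0 < j"
  shows "j \<in> c ` S"
proof -
  define n where "n = (LEAST n. j \<le> c n)"
  have "j \<le> c n"
    unfolding n_def using counts_unbounded[OF assms(1,2)] by (rule LeastI_ex)
  moreover from this assms(3) obtain k where k: "n = Suc k"
    by (cases n) auto
  moreover have "\<not> j \<le> c k"
    using k not_less_Least[of k "\<lambda>n. j \<le> c n"] unfolding n_def by simp
  moreover have "c n = c k + (if n \<in> S then 1 else 0)"
    using assms(1) k by (simp add: counts_def)
  ultimately have "c n = j" "n \<in> S"
    by (auto split: if_splits)
  then show ?thesis
    by blast
qed

lemma inf_values_reindex:
  assumes "counts S c" "infinite S" "\<And>n. n \<in> S \<Longrightarrow> s n = t (c n)"
  shows "inf_values s S = inf_values t UNIV"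
proof -
  have inj: "inj_on c S"
    by (rule strict_mono_on_imp_inj_on) (auto intro: strict_mono_onI counts_less[OF assms(1)])
  have "infinite {n \<in> S. s n = v} \<longleftrightarrow> infinite {j. t j = v}" for v
  proof -
    have img: "c ` {n \<in> S. s n = v} = {j \<in> c ` S. t j = v}"
      using assms(3) by auto
    have split: "{j. t j = v} = {j \<in> c ` S. t j = v} \<union> {j \<in> - c ` S. t j = v}"
      by auto
    have fin: "finite {j \<in> - c ` S. t j = v}"
    proof (rule finite_subset)
      show "{j \<in> - c ` S. t j = v} \<subseteq> {..c 0}"
        using counts_surj[OF assms(1,2)] by (auto simp: not_less[symmetric])
    qed simp
    have inj_fin: "finite (c ` {n \<in> S. s n = v}) \<longleftrightarrow> finite {n \<in> S. s n = v}"
      by (rule finite_image_iff) (rule inj_on_subset[OF inj], blast)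
    show ?thesis
      unfolding split finite_Un inj_fin[symmetric] img using fin by blast
  qed
  then show ?thesis
    by (simp add: inf_values_def)
qed

section \<open>Branches, histories and switching strategies\<close>

definition branch_prefix :: "(nat \<Rightarrow> 'x) \<Rightarrow> nat \<Rightarrow> 'x list" where
  "branch_prefix br n = map br [0..<n]"

lemma branch_prefix_0 [simp]: "branch_prefix br 0 = []"
  by (simp add: branch_prefix_def)

lemma branch_prefix_Suc [simp]: "branch_prefix br (Suc n) = branch_prefix br n @ [br n]"
  by (simp add: branch_prefix_def)

lemma length_branch_prefix [simp]: "length (branch_prefix br n) = n"
  by (simp add: branch_prefix_def)

lemma prefix_chain_limit:
  assumes grow: "\<And>n. \<exists>ys. xs (Suc n) = xs n @ ys"
    and unbounded: "\<And>k. \<exists>n. k \<le> length (xs n)"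
  shows "\<exists>br. \<forall>n. xs n = branch_prefix br (length (xs n))"
proof -
  have mono: "\<exists>ys. xs m = xs n @ ys" if "n \<le> m" for n m
    using that
  proof (induction rule: dec_induct)
    case (step m)
    then show ?case
      using grow[of m] by (metis append.assoc)
  qed simp
  have agree: "xs n ! i = xs m ! i" if "i < length (xs n)" "i < length (xs m)" for i n m
    using mono[of n m] mono[of m n] that by (cases "n \<le> m") (auto simp: nth_append)
  define br where "br i = xs (SOME n. i < length (xs n)) ! i" for i
  have "br i = xs n ! i" if "i < length (xs n)" for i n
  proof -
    have "\<exists>n. i < length (xs n)"
      using unbounded[of "Suc i"] by (auto simp: Suc_le_eq)
    then show ?thesis
      unfolding br_def using agree that by (metis someI_ex)
  qed
  then have "xs n = branch_prefix br (length (xs n))" for n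
    by (intro nth_equalityI) (auto simp: branch_prefix_def)
  then show ?thesis
    by blast
qed

definition consistent :: "('m \<Rightarrow> 'd set) \<Rightarrow> ('d list \<Rightarrow> 'm) \<Rightarrow> 'd list \<Rightarrow> bool" where
  "consistent D \<sigma> u \<longleftrightarrow> (\<forall>i < length u. u ! i \<in> D (\<sigma> (take i u)))"

lemma consistent_Nil [simp]: "consistent D \<sigma> []"
  by (simp add: consistent_def)

lemma consistent_snoc [simp]:
  "consistent D \<sigma> (u @ [d]) \<longleftrightarrow> consistent D \<sigma> u \<and> d \<in> D (\<sigma> u)"
  unfolding consistent_def by (auto simp: nth_append less_Suc_eq)

lemma consistent_branch_prefix:
  "consistent D \<sigma> (branch_prefix br n) \<longleftrightarrow> (\<forall>i < n. br i \<in> D (\<sigma> (branch_prefix br i)))"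
  by (induction n) (auto simp: less_Suc_eq)

lemma dir_cases: "d = L \<or> d = R"
  by (cases d) auto

lemma dir_singleton_ne_UNIV [simp]: "{d} \<noteq> (UNIV :: dir set)"
proof
  assume "{d} = (UNIV :: dir set)"
  then have "L \<in> {d}" "R \<in> {d}"
    by simp_all
  then show False
    by simp
qed

lemma dir_set_singleton:
  assumes "S \<noteq> {}" "S \<noteq> (UNIV :: dir set)"
  shows "\<exists>d. S = {d}"
proof -
  obtain d where d: "d \<in> S"
    using assms(1) by blast
  have "x = d" if "x \<in> S" for x
  proof (rule ccontr)
    assume "x \<noteq> d"
    then have "y \<in> S" for y
      using d that dir_cases[of x] dir_cases[of d] dir_cases[of y] by auto
    then have "UNIV = S"
      by (rule UNIV_eq_I)
    with assms(2) show False
      by simp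
  qed
  then have "S = {d}"
    using d by blast
  then show ?thesis
    by blast
qed

text \<open>
  The state records which of \<sigma>1, \<sigma>2 is active and the history each has been fed. Whenever m0
  is played, Adam's direction selects the strategy to continue with (L for \<sigma>1, R for \<sigma>2); the
  other one stays suspended at m0.
\<close>

fun switch_move :: "('d list \<Rightarrow> 'm) \<Rightarrow> ('d list \<Rightarrow> 'm) \<Rightarrow> bool \<times> 'd list \<times> 'd list \<Rightarrow> 'm" where
  "switch_move \<sigma>1 \<sigma>2 (k, x1, x2) = (if k then \<sigma>1 x1 else \<sigma>2 x2)"

fun switch_step ::
  "(dir list \<Rightarrow> 'm) \<Rightarrow> (dir list \<Rightarrow> 'm) \<Rightarrow> 'm \<Rightarrow> bool \<times> dir list \<times> dir list \<Rightarrow> dir \<Rightarrow> bool \<times> dir list \<times> dir list"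
where
  "switch_step \<sigma>1 \<sigma>2 m0 (k, x1, x2) d =
     (if (if switch_move \<sigma>1 \<sigma>2 (k, x1, x2) = m0 then d = L else k)
      then (True, x1 @ [d], x2) else (False, x1, x2 @ [d]))"

definition switch_state ::
  "(dir list \<Rightarrow> 'm) \<Rightarrow> (dir list \<Rightarrow> 'm) \<Rightarrow> 'm \<Rightarrow> dir list \<Rightarrow> dir list \<Rightarrow> bool \<times> dir list \<times> dir list"
where
  "switch_state \<sigma>1 \<sigma>2 m0 h2 = foldl (switch_step \<sigma>1 \<sigma>2 m0) (True, [], h2)"

definition switch_strategy :: "(dir list \<Rightarrow> 'm) \<Rightarrow> (dir list \<Rightarrow> 'm) \<Rightarrow> 'm \<Rightarrow> dir list \<Rightarrow> dir list \<Rightarrow> 'm" where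
  "switch_strategy \<sigma>1 \<sigma>2 m0 h2 u = switch_move \<sigma>1 \<sigma>2 (switch_state \<sigma>1 \<sigma>2 m0 h2 u)"

lemma switch_state_Nil [simp]: "switch_state \<sigma>1 \<sigma>2 m0 h2 [] = (True, [], h2)"
  by (simp add: switch_state_def)

lemma switch_state_snoc [simp]:
  "switch_state \<sigma>1 \<sigma>2 m0 h2 (u @ [d]) = switch_step \<sigma>1 \<sigma>2 m0 (switch_state \<sigma>1 \<sigma>2 m0 h2 u) d"
  by (simp add: switch_state_def)

fun switch_invariant ::
  "('m \<Rightarrow> dir set) \<Rightarrow> 'm \<Rightarrow> (dir list \<Rightarrow> 'm) \<Rightarrow> (dir list \<Rightarrow> 'm) \<Rightarrow> bool \<times> dir list \<times> dir list \<Rightarrow> bool"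
where
  "switch_invariant D m0 \<sigma>1 \<sigma>2 (k, x1, x2) \<longleftrightarrow>
     consistent (D(m0 := {L})) \<sigma>1 x1 \<and> consistent (D(m0 := {R})) \<sigma>2 x2 \<and>
     (if k then \<sigma>2 x2 else \<sigma>1 x1) = m0"

lemma switch_step_cases:
  assumes inv: "switch_invariant D m0 \<sigma>1 \<sigma>2 (k, x1, x2)"
    and d: "d \<in> D (switch_move \<sigma>1 \<sigma>2 (k, x1, x2))"
  obtains (first) "switch_step \<sigma>1 \<sigma>2 m0 (k, x1, x2) d = (True, x1 @ [d], x2)"
      "\<sigma>1 x1 = switch_move \<sigma>1 \<sigma>2 (k, x1, x2)" "d \<in> (D(m0 := {L})) (\<sigma>1 x1)"
  | (second) "switch_step \<sigma>1 \<sigma>2 m0 (k, x1, x2) d = (False, x1, x2 @ [d])"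
      "\<sigma>2 x2 = switch_move \<sigma>1 \<sigma>2 (k, x1, x2)" "d \<in> (D(m0 := {R})) (\<sigma>2 x2)"
proof (cases "switch_move \<sigma>1 \<sigma>2 (k, x1, x2) = m0")
  case True
  then have "\<sigma>1 x1 = m0" "\<sigma>2 x2 = m0"
    using inv by (auto split: if_splits)
  then show ?thesis
    using True by (cases d) (simp_all add: that)
next
  case False
  then show ?thesis
    using d by (cases k) (simp_all add: that)
qed

lemma switch_step_invariant:
  assumes inv: "switch_invariant D m0 \<sigma>1 \<sigma>2 (k, x1, x2)"
    and d: "d \<in> D (switch_move \<sigma>1 \<sigma>2 (k, x1, x2))"
  shows "switch_invariant D m0 \<sigma>1 \<sigma>2 (switch_step \<sigma>1 \<sigma>2 m0 (k, x1, x2) d)"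
  using inv d
proof (cases rule: switch_step_cases)
  case first
  moreover have "\<sigma>2 x2 = m0"
    using inv first(1) by (cases k) (auto split: if_splits)
  ultimately show ?thesis
    using inv by simp
next
  case second
  moreover have "\<sigma>1 x1 = m0"
    using inv second(1) by (cases k) (auto split: if_splits)
  ultimately show ?thesis
    using inv by simp
qed

lemma switch_state_invariant:
  assumes "consistent (D(m0 := {R})) \<sigma>2 h2" "\<sigma>2 h2 = m0"
  shows "consistent D (switch_strategy \<sigma>1 \<sigma>2 m0 h2) u \<Longrightarrow>
    switch_invariant D m0 \<sigma>1 \<sigma>2 (switch_state \<sigma>1 \<sigma>2 m0 h2 u)"
proof (induction u rule: rev_induct)
  case (snoc d u)
  obtain k x1 x2 where "switch_state \<sigma>1 \<sigma>2 m0 h2 u = (k, x1, x2)"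
    by (metis prod_cases3)
  with snoc show ?case
    using switch_step_invariant[of D m0 \<sigma>1 \<sigma>2 k x1 x2 d] by (simp add: switch_strategy_def)
qed (use assms in simp)

lemma switch_state_snoc_cases:
  assumes "consistent (D(m0 := {R})) \<sigma>2 h2" "\<sigma>2 h2 = m0"
    and "consistent D (switch_strategy \<sigma>1 \<sigma>2 m0 h2) u" "d \<in> D (switch_strategy \<sigma>1 \<sigma>2 m0 h2 u)"
    and st: "switch_state \<sigma>1 \<sigma>2 m0 h2 u = (k, x1, x2)"
  obtains (first) "switch_state \<sigma>1 \<sigma>2 m0 h2 (u @ [d]) = (True, x1 @ [d], x2)"
      "switch_strategy \<sigma>1 \<sigma>2 m0 h2 u = \<sigma>1 x1"
      "consistent (D(m0 := {L})) \<sigma>1 x1" "d \<in> (D(m0 := {L})) (\<sigma>1 x1)"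
  | (second) "switch_state \<sigma>1 \<sigma>2 m0 h2 (u @ [d]) = (False, x1, x2 @ [d])"
      "switch_strategy \<sigma>1 \<sigma>2 m0 h2 u = \<sigma>2 x2"
      "consistent (D(m0 := {R})) \<sigma>2 x2" "d \<in> (D(m0 := {R})) (\<sigma>2 x2)"
proof -
  have inv: "switch_invariant D m0 \<sigma>1 \<sigma>2 (k, x1, x2)"
    using switch_state_invariant[OF assms(1-3)] st by simp
  moreover have "d \<in> D (switch_move \<sigma>1 \<sigma>2 (k, x1, x2))"
    using assms(4) st by (simp add: switch_strategy_def)
  ultimately show ?thesis
  proof (cases rule: switch_step_cases)
    case first
    then show ?thesis
      using that(1) inv st by (simp add: switch_strategy_def)
  next
    case second
    then show ?thesis
      using that(2) inv st by (simp add: switch_strategy_def)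
  qed
qed

section \<open>Games with a conjunction of parity objectives\<close>

text \<open>D m restricts Adam's answers to the move m; the game proper is D = (\<lambda>_. UNIV).\<close>

definition eve_wins ::
  "'m set \<Rightarrow> ('m \<Rightarrow> dir \<Rightarrow> 'm \<Rightarrow> bool) \<Rightarrow> ('m \<Rightarrow> nat) set \<Rightarrow> ('m \<Rightarrow> dir set) \<Rightarrow> (dir list \<Rightarrow> 'm) \<Rightarrow> bool"
where
  "eve_wins I E Ps D \<sigma> \<longleftrightarrow> \<sigma> [] \<in> I \<and>
     (\<forall>u d. consistent D \<sigma> u \<longrightarrow> d \<in> D (\<sigma> u) \<longrightarrow> E (\<sigma> u) d (\<sigma> (u @ [d]))) \<and>
     (\<forall>br. (\<forall>n. br n \<in> D (\<sigma> (branch_prefix br n))) \<longrightarrow>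
        (\<forall>\<rho> \<in> Ps. parity_accepting (\<lambda>n. \<rho> (\<sigma> (branch_prefix br n)))))"

definition adam_wins_positionally ::
  "'m set \<Rightarrow> ('m \<Rightarrow> dir \<Rightarrow> 'm \<Rightarrow> bool) \<Rightarrow> ('m \<Rightarrow> nat) set \<Rightarrow> ('m \<Rightarrow> dir) \<Rightarrow> bool"
where
  "adam_wins_positionally I E Ps P \<longleftrightarrow>
     (\<forall>ms. ms 0 \<in> I \<longrightarrow> (\<forall>i. E (ms i) (P (ms i)) (ms (Suc i))) \<longrightarrow>
        (\<exists>\<rho> \<in> Ps. \<not> parity_accepting (\<lambda>i. \<rho> (ms i))))"

locale finite_arena =
  fixes M :: "'m set" and I :: "'m set" and E :: "'m \<Rightarrow> dir \<Rightarrow> 'm \<Rightarrow> bool" and Ps :: "('m \<Rightarrow> nat) set"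
  assumes finite_moves: "finite M"
    and start_moves: "I \<subseteq> M"
    and edge_moves: "E m d m' \<Longrightarrow> m' \<in> M"
begin

lemma eve_wins_moves:
  assumes "eve_wins I E Ps D \<sigma>"
  shows "consistent D \<sigma> u \<Longrightarrow> \<sigma> u \<in> M"
proof (induction u rule: rev_induct)
  case Nil
  then show ?case
    using assms start_moves by (auto simp: eve_wins_def)
next
  case (snoc d u)
  then have "E (\<sigma> u) d (\<sigma> (u @ [d]))"
    using assms by (simp add: eve_wins_def)
  then show ?case
    by (rule edge_moves)
qed

lemma eve_wins_subplay:
  assumes win: "eve_wins I E Ps D \<sigma>" and "\<rho> \<in> Ps"
    and hist: "\<And>n. X (Suc n) = (if Suc n \<in> S then X n @ [br n] else X n)"
    and cons: "\<And>n. consistent D \<sigma> (X n)"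
    and play: "\<And>n. n \<in> S \<Longrightarrow> g n = \<sigma> (X n)"
  shows "even_dominated (inf_values (\<lambda>n. \<rho> (g n)) S)"
proof (cases "finite S")
  case True
  then show ?thesis
    by (simp add: inf_values_finite_dom)
next
  case False
  have counts: "counts S (\<lambda>n. length (X n))"
    by (simp add: counts_def hist)
  have "\<exists>b. \<forall>n. X n = branch_prefix b (length (X n))"
  proof (rule prefix_chain_limit)
    show "\<exists>ys. X (Suc n) = X n @ ys" for n
      by (simp add: hist)
    show "\<exists>n. k \<le> length (X n)" for k
      using counts_unbounded[OF counts False] .
  qed
  then obtain b where b: "\<And>n. X n = branch_prefix b (length (X n))"
    by blast
  have b_cons: "consistent D \<sigma> (branch_prefix b j)" for j
  proof -
    obtain n where "j \<le> length (X n)"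
      using counts_unbounded[OF counts False] by blast
    moreover have "consistent D \<sigma> (branch_prefix b (length (X n)))"
      using cons[of n] by (metis b)
    ultimately show ?thesis
      by (simp add: consistent_branch_prefix)
  qed
  define t where "t j = \<rho> (\<sigma> (branch_prefix b j))" for j
  have "b n \<in> D (\<sigma> (branch_prefix b n))" for n
    using b_cons[of "Suc n"] by simp
  then have "parity_accepting t"
    using win \<open>\<rho> \<in> Ps\<close> unfolding t_def eve_wins_def by blast
  moreover have "finite (range t)"
  proof (rule finite_subset)
    show "range t \<subseteq> \<rho> ` M"
      using eve_wins_moves[OF win b_cons] by (auto simp: t_def)
  qed (use finite_moves in simp)
  moreover have "inf_values (\<lambda>n. \<rho> (g n)) S = inf_values t UNIV"
    by (rule inf_values_reindex[OF counts False]) (use b play in \<open>auto simp: t_def\<close>)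
  ultimately show ?thesis
    by (simp add: parity_accepting_iff_even_dominated)
qed

lemma switch_strategy_accepting:
  assumes win1: "eve_wins I E Ps (D(m0 := {L})) \<sigma>1" and win2: "eve_wins I E Ps (D(m0 := {R})) \<sigma>2"
    and h2: "consistent (D(m0 := {R})) \<sigma>2 h2" "\<sigma>2 h2 = m0"
    and br: "\<And>n. br n \<in> D (switch_strategy \<sigma>1 \<sigma>2 m0 h2 (branch_prefix br n))"
    and "\<rho> \<in> Ps"
  shows "parity_accepting (\<lambda>n. \<rho> (switch_strategy \<sigma>1 \<sigma>2 m0 h2 (branch_prefix br n)))"
proof -
  let ?g = "\<lambda>n. switch_strategy \<sigma>1 \<sigma>2 m0 h2 (branch_prefix br n)"
  define K where "K n = fst (switch_state \<sigma>1 \<sigma>2 m0 h2 (branch_prefix br n))" for n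
  define X1 where "X1 n = fst (snd (switch_state \<sigma>1 \<sigma>2 m0 h2 (branch_prefix br n)))" for n
  define X2 where "X2 n = snd (snd (switch_state \<sigma>1 \<sigma>2 m0 h2 (branch_prefix br n)))" for n
  have st: "switch_state \<sigma>1 \<sigma>2 m0 h2 (branch_prefix br n) = (K n, X1 n, X2 n)" for n
    by (simp add: K_def X1_def X2_def)
  have cons: "consistent D (switch_strategy \<sigma>1 \<sigma>2 m0 h2) (branch_prefix br n)" for n
    using br by (simp add: consistent_branch_prefix)
  have hist: "X1 (Suc n) = (if Suc n \<in> {n. K n} then X1 n @ [br n] else X1 n) \<and>
      X2 (Suc n) = (if Suc n \<in> {n. \<not> K n} then X2 n @ [br n] else X2 n)" for n
    using h2 cons br st[of n]
    by (cases rule: switch_state_snoc_cases) (use st[of "Suc n"] in simp_all)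
  have inv: "consistent (D(m0 := {L})) \<sigma>1 (X1 n) \<and> consistent (D(m0 := {R})) \<sigma>2 (X2 n)" for n
    using switch_state_invariant[OF h2 cons[of n]] st[of n] by simp
  have g: "?g n = (if K n then \<sigma>1 (X1 n) else \<sigma>2 (X2 n))" for n
    using st[of n] by (simp add: switch_strategy_def)
  have "even_dominated (inf_values (\<lambda>n. \<rho> (?g n)) {n. K n})"
    by (rule eve_wins_subplay[OF win1 \<open>\<rho> \<in> Ps\<close>]) (use hist inv g in auto)
  moreover have "even_dominated (inf_values (\<lambda>n. \<rho> (?g n)) {n. \<not> K n})"
    by (rule eve_wins_subplay[OF win2 \<open>\<rho> \<in> Ps\<close>]) (use hist inv g in auto)
  moreover have "{n. K n} \<union> {n. \<not> K n} = UNIV"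
    by blast
  moreover have "finite (range (\<lambda>n. \<rho> (?g n)))"
  proof (rule finite_subset)
    show "range (\<lambda>n. \<rho> (?g n)) \<subseteq> \<rho> ` M"
      using eve_wins_moves[OF win1] eve_wins_moves[OF win2] inv g by auto
  qed (use finite_moves in simp)
  ultimately show ?thesis
    by (metis even_dominated_Un inf_values_Un parity_accepting_iff_even_dominated)
qed

lemma eve_wins_switch:
  assumes win1: "eve_wins I E Ps (D(m0 := {L})) \<sigma>1" and win2: "eve_wins I E Ps (D(m0 := {R})) \<sigma>2"
    and h2: "consistent (D(m0 := {R})) \<sigma>2 h2" "\<sigma>2 h2 = m0"
  shows "eve_wins I E Ps D (switch_strategy \<sigma>1 \<sigma>2 m0 h2)"
  unfolding eve_wins_def
proof (intro conjI allI impI ballI)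
  show "switch_strategy \<sigma>1 \<sigma>2 m0 h2 [] \<in> I"
    using win1 by (simp add: switch_strategy_def eve_wins_def)
next
  fix u d
  assume u: "consistent D (switch_strategy \<sigma>1 \<sigma>2 m0 h2) u"
    and d: "d \<in> D (switch_strategy \<sigma>1 \<sigma>2 m0 h2 u)"
  obtain k x1 x2 where st: "switch_state \<sigma>1 \<sigma>2 m0 h2 u = (k, x1, x2)"
    by (metis prod_cases3)
  from h2 u d st
  show "E (switch_strategy \<sigma>1 \<sigma>2 m0 h2 u) d (switch_strategy \<sigma>1 \<sigma>2 m0 h2 (u @ [d]))"
  proof (cases rule: switch_state_snoc_cases)
    case first
    then show ?thesis
      using win1 by (simp add: switch_strategy_def eve_wins_def)
  next
    case second
    then show ?thesis
      using win2 by (simp add: switch_strategy_def eve_wins_def)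
  qed
next
  fix br \<rho>
  assume "\<forall>n. br n \<in> D (switch_strategy \<sigma>1 \<sigma>2 m0 h2 (branch_prefix br n))" "\<rho> \<in> Ps"
  then show "parity_accepting (\<lambda>n. \<rho> (switch_strategy \<sigma>1 \<sigma>2 m0 h2 (branch_prefix br n)))"
    using switch_strategy_accepting[OF win1 win2 h2] by blast
qed

lemma eve_wins_unvisited:
  assumes win: "eve_wins I E Ps (D(m0 := X)) \<sigma>"
    and avoid: "\<And>u. consistent (D(m0 := X)) \<sigma> u \<Longrightarrow> \<sigma> u \<noteq> m0"
  shows "eve_wins I E Ps D \<sigma>"
proof -
  have same: "consistent D \<sigma> u \<longleftrightarrow> consistent (D(m0 := X)) \<sigma> u" for u
  proof (induction u rule: rev_induct)
    case (snoc d u)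
    then show ?case
      unfolding consistent_snoc using avoid[of u] fun_upd_other[of "\<sigma> u" m0 D X] by blast
  qed simp
  show ?thesis
    unfolding eve_wins_def
  proof (intro conjI allI impI ballI)
    show "\<sigma> [] \<in> I"
      using win by (simp add: eve_wins_def)
  next
    fix u d
    assume "consistent D \<sigma> u" "d \<in> D (\<sigma> u)"
    then have "consistent (D(m0 := X)) \<sigma> u" "d \<in> (D(m0 := X)) (\<sigma> u)"
      using same avoid by auto
    then show "E (\<sigma> u) d (\<sigma> (u @ [d]))"
      using win by (simp add: eve_wins_def)
  next
    fix br \<rho>
    assume br: "\<forall>n. br n \<in> D (\<sigma> (branch_prefix br n))" and "\<rho> \<in> Ps"
    have "consistent D \<sigma> (branch_prefix br n)" for n
      using br by (simp add: consistent_branch_prefix)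
    then have "consistent (D(m0 := X)) \<sigma> (branch_prefix br n)" for n
      using same by blast
    then have "br n \<in> (D(m0 := X)) (\<sigma> (branch_prefix br n))" for n
      by (metis branch_prefix_Suc consistent_snoc)
    then show "parity_accepting (\<lambda>n. \<rho> (\<sigma> (branch_prefix br n)))"
      using win \<open>\<rho> \<in> Ps\<close> by (simp add: eve_wins_def)
  qed
qed

lemma adam_or_eve_wins_deterministic:
  assumes "\<And>m. m \<in> M \<Longrightarrow> \<exists>d. D m = {d}"
  shows "(\<exists>P. adam_wins_positionally I E Ps P) \<or> (\<exists>\<sigma>. eve_wins I E Ps D \<sigma>)"
proof -
  define P where "P m = (THE d. D m = {d})" for m
  have P: "D m = {P m}" if "m \<in> M" for m
    using assms[OF that] by (auto simp: P_def)
  show ?thesis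
  proof (cases "adam_wins_positionally I E Ps P")
    case False
    then obtain ms where start: "ms 0 \<in> I" and edge: "\<And>i. E (ms i) (P (ms i)) (ms (Suc i))"
      and acc: "\<And>\<rho>. \<rho> \<in> Ps \<Longrightarrow> parity_accepting (\<lambda>i. \<rho> (ms i))"
      unfolding adam_wins_positionally_def by blast
    have moves: "ms i \<in> M" for i
      using start_moves start edge_moves[OF edge] by (cases i) auto
    have "eve_wins I E Ps D (\<lambda>u. ms (length u))"
      unfolding eve_wins_def
    proof (intro conjI allI impI ballI)
      fix u :: "dir list" and d
      assume "d \<in> D (ms (length u))"
      then show "E (ms (length u)) d (ms (length (u @ [d])))"
        using P[OF moves] edge by simp
    next
      fix br \<rho>
      assume "\<rho> \<in> Ps"
      then show "parity_accepting (\<lambda>n. \<rho> (ms (length (branch_prefix br n))))"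
        using acc by simp
    qed (simp add: start)
    then show ?thesis
      by blast
  qed blast
qed

lemma adam_or_eve_wins_restricted:
  assumes "\<And>m. m \<in> M \<Longrightarrow> D m \<noteq> {}"
  shows "(\<exists>P. adam_wins_positionally I E Ps P) \<or> (\<exists>\<sigma>. eve_wins I E Ps D \<sigma>)"
  using assms
proof (induction "card {m \<in> M. D m = UNIV}" arbitrary: D)
  case 0
  have "finite {m \<in> M. D m = UNIV}"
    using finite_moves by simp
  then have not_UNIV: "D m \<noteq> UNIV" if "m \<in> M" for m
    using 0 that by auto
  have "\<exists>d. D m = {d}" if "m \<in> M" for m
    by (rule dir_set_singleton[OF "0.prems"[OF that] not_UNIV[OF that]])
  then show ?case
    by (rule adam_or_eve_wins_deterministic)
next
  case (Suc n)
  then obtain m0 where m0: "m0 \<in> M" "D m0 = UNIV"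
    by (metis (mono_tags, lifting) Collect_empty_eq card.empty nat.distinct(1))
  have card: "n = card {m \<in> M. (D(m0 := {d})) m = UNIV}" for d
  proof -
    have "{m \<in> M. (D(m0 := {d})) m = UNIV} = {m \<in> M. D m = UNIV} - {m0}"
      by auto
    then show ?thesis
      using Suc.hyps(2) m0 finite_moves by simp
  qed
  have nonempty: "\<And>m. m \<in> M \<Longrightarrow> (D(m0 := {d})) m \<noteq> {}" for d
    using Suc.prems by simp
  have IH: "(\<exists>P. adam_wins_positionally I E Ps P) \<or> (\<exists>\<sigma>. eve_wins I E Ps (D(m0 := {d})) \<sigma>)" for d
    by (rule Suc.hyps(1)[OF card nonempty])
  show ?case
  proof (cases "\<exists>P. adam_wins_positionally I E Ps P")
    case False
    then obtain \<sigma>1 \<sigma>2 where win1: "eve_wins I E Ps (D(m0 := {L})) \<sigma>1"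
      and win2: "eve_wins I E Ps (D(m0 := {R})) \<sigma>2"
      using IH by blast
    show ?thesis
    proof (cases "\<exists>h2. consistent (D(m0 := {R})) \<sigma>2 h2 \<and> \<sigma>2 h2 = m0")
      case True
      then show ?thesis
        using eve_wins_switch[OF win1 win2] by blast
    next
      case False
      then show ?thesis
        using eve_wins_unvisited[OF win2] by blast
    qed
  qed blast
qed

corollary adam_positional_or_eve_wins:
  "(\<exists>P. adam_wins_positionally I E Ps P) \<or> (\<exists>\<sigma>. eve_wins I E Ps (\<lambda>_. UNIV) \<sigma>)"
  by (rule adam_or_eve_wins_restricted) simp

end

section \<open>The intersection game of two automata\<close>

fun child :: "dir \<Rightarrow> 's \<times> 'a \<times> 's \<times> 's \<Rightarrow> 's" where
  "child L (q, a, qL, qR) = qL"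
| "child R (q, a, qL, qR) = qR"

definition trans_pairs :: "('a, 'q) npta \<Rightarrow> ('a, 'p) npta \<Rightarrow> (('q \<times> 'a \<times> 'q \<times> 'q) \<times> ('p \<times> 'a \<times> 'p \<times> 'p)) set" where
  "trans_pairs A B = {(\<delta>A, \<delta>B). \<delta>A \<in> trans A \<and> \<delta>B \<in> trans B \<and> fst (snd \<delta>A) = fst (snd \<delta>B)}"

definition initial_pairs :: "('a, 'q) npta \<Rightarrow> ('a, 'p) npta \<Rightarrow> (('q \<times> 'a \<times> 'q \<times> 'q) \<times> ('p \<times> 'a \<times> 'p \<times> 'p)) set" where
  "initial_pairs A B = {(\<delta>A, \<delta>B) \<in> trans_pairs A B. fst \<delta>A = init A \<and> fst \<delta>B = init B}"

definition pair_edge ::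
  "('a, 'q) npta \<Rightarrow> ('a, 'p) npta \<Rightarrow> ('q \<times> 'a \<times> 'q \<times> 'q) \<times> ('p \<times> 'a \<times> 'p \<times> 'p) \<Rightarrow> dir \<Rightarrow>
    ('q \<times> 'a \<times> 'q \<times> 'q) \<times> ('p \<times> 'a \<times> 'p \<times> 'p) \<Rightarrow> bool"
where
  "pair_edge A B m d m' \<longleftrightarrow>
     m' \<in> trans_pairs A B \<and> fst (fst m') = child d (fst m) \<and> fst (snd m') = child d (snd m)"

definition pair_priorities ::
  "('a, 'q) npta \<Rightarrow> ('a, 'p) npta \<Rightarrow> (('q \<times> 'a \<times> 'q \<times> 'q) \<times> ('p \<times> 'a \<times> 'p \<times> 'p) \<Rightarrow> nat) set"
where
  "pair_priorities A B = {\<lambda>m. pri A (fst (fst m)), \<lambda>m. pri B (fst (snd m))}"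

lemma trans_pairs_finite_arena:
  assumes "wf_npta A" "wf_npta B"
  shows "finite_arena (trans_pairs A B) (initial_pairs A B) (pair_edge A B)"
proof
  have "finite (trans A)" "finite (trans B)"
    using assms unfolding wf_npta_def by (meson finite_SigmaI finite_subset)+
  moreover have "trans_pairs A B \<subseteq> trans A \<times> trans B"
    by (auto simp: trans_pairs_def)
  ultimately show "finite (trans_pairs A B)"
    by (meson finite_SigmaI finite_subset)
qed (auto simp: initial_pairs_def pair_edge_def)

lemma common_tree_if_eve_wins:
  assumes "wf_npta A" "wf_npta B" "alph A = alph B"
    and win: "eve_wins (initial_pairs A B) (pair_edge A B) (pair_priorities A B) (\<lambda>_. UNIV) \<sigma>"
  shows "\<exists>t. t \<in> lang A \<and> t \<in> lang B"
proof -
  interpret finite_arena "trans_pairs A B" "initial_pairs A B" "pair_edge A B" "pair_priorities A B"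
    using assms(1,2) by (rule trans_pairs_finite_arena)
  have all_consistent: "consistent (\<lambda>_. UNIV) \<sigma> u" for u
    by (simp add: consistent_def)
  have moves: "\<sigma> u \<in> trans_pairs A B" for u
    by (rule eve_wins_moves[OF win all_consistent])
  have "pair_edge A B (\<sigma> u) d (\<sigma> (u @ [d]))" for u d
    using win all_consistent unfolding eve_wins_def by blast
  then have next_states: "fst (fst (\<sigma> (u @ [d]))) = child d (fst (\<sigma> u))"
    "fst (snd (\<sigma> (u @ [d]))) = child d (snd (\<sigma> u))" for u d
    by (simp_all add: pair_edge_def)
  define t where "t u = fst (snd (fst (\<sigma> u)))" for u
  have run: "(fst (fst (\<sigma> u)), t u, fst (fst (\<sigma> (u @ [L]))), fst (fst (\<sigma> (u @ [R])))) \<in> trans A \<and>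
      (fst (snd (\<sigma> u)), t u, fst (snd (\<sigma> (u @ [L]))), fst (snd (\<sigma> (u @ [R])))) \<in> trans B" for u
    using moves[of u] unfolding next_states t_def
    by (cases "fst (\<sigma> u)"; cases "snd (\<sigma> u)") (auto simp: trans_pairs_def)
  have tree: "t u \<in> alph A" for u
    using moves[of u] assms(1) by (auto simp: t_def trans_pairs_def wf_npta_def)
  have init: "fst (fst (\<sigma> [])) = init A" "fst (snd (\<sigma> [])) = init B"
    using win by (auto simp: eve_wins_def initial_pairs_def)
  have acc: "parity_accepting (\<lambda>n. pri A (fst (fst (\<sigma> (map br [0..<n])))))"
    "parity_accepting (\<lambda>n. pri B (fst (snd (\<sigma> (map br [0..<n])))))" for br
    using win by (auto simp: eve_wins_def branch_prefix_def pair_priorities_def)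
  have "t \<in> lang A"
    unfolding lang_def is_tree_def accepts_from_def mem_Collect_eq
    using run tree init acc by (intro conjI exI[of _ "\<lambda>u. fst (fst (\<sigma> u))"]) auto
  moreover have "t \<in> lang B"
    unfolding lang_def is_tree_def accepts_from_def mem_Collect_eq
    using run tree init acc assms(3) by (intro conjI exI[of _ "\<lambda>u. fst (snd (\<sigma> u))"]) auto
  ultimately show ?thesis
    by blast
qed

lemma rejecting_if_adam_wins_positionally:
  assumes win: "adam_wins_positionally (initial_pairs A B) (pair_edge A B) (pair_priorities A B) P"
    and \<delta>A: "\<delta>A \<in> trans_seqs A b" and \<delta>B: "\<delta>B \<in> trans_seqs B b"
    and dirs: "\<And>i. P (\<delta>A i, \<delta>B i) = snd (b i)"
  shows "seq_rejecting A \<delta>A \<or> seq_rejecting B \<delta>B"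
proof -
  define ms where "ms i = (\<delta>A i, \<delta>B i)" for i
  have child_if: "child d \<delta> = (if d = L then fst (snd (snd \<delta>)) else snd (snd (snd \<delta>)))" for d \<delta>
    by (cases d; cases \<delta>) auto
  have "ms 0 \<in> initial_pairs A B"
    using \<delta>A \<delta>B by (simp add: ms_def initial_pairs_def trans_pairs_def trans_seqs_def)
  moreover have "pair_edge A B (ms i) (P (ms i)) (ms (Suc i))" for i
    using \<delta>A \<delta>B dirs[of i] by (simp add: ms_def pair_edge_def trans_pairs_def trans_seqs_def child_if)
  ultimately obtain \<rho> where "\<rho> \<in> pair_priorities A B" "\<not> parity_accepting (\<lambda>i. \<rho> (ms i))"
    using win unfolding adam_wins_positionally_def by blast
  then show ?thesis
    by (auto simp: pair_priorities_def seq_rejecting_def ms_def)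
qed

theorem mainTheorem4:
  fixes A :: "('a, 'q) npta" and B :: "('a, 'p) npta"
  assumes "wf_npta A" and "wf_npta B" and "alph A = alph B"
    and "all_productive A" and "all_productive B"
    and "lang A \<inter> lang B = {}"
  shows "\<exists>P :: ('q \<times> 'a \<times> 'q \<times> 'q) \<Rightarrow> ('p \<times> 'a \<times> 'p \<times> 'p) \<Rightarrow> dir.
     \<forall>b :: nat \<Rightarrow> 'a \<times> dir. (\<forall>i. fst (b i) \<in> alph A) \<longrightarrow>
       (\<forall>\<delta>A \<in> trans_seqs A b. \<forall>\<delta>B \<in> trans_seqs B b.
          (\<forall>i. P (\<delta>A i) (\<delta>B i) = snd (b i)) \<longrightarrow>
          seq_rejecting A \<delta>A \<or> seq_rejecting B \<delta>B)"
proof -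
  interpret finite_arena "trans_pairs A B" "initial_pairs A B" "pair_edge A B" "pair_priorities A B"
    using assms(1,2) by (rule trans_pairs_finite_arena)
  have "\<nexists>\<sigma>. eve_wins (initial_pairs A B) (pair_edge A B) (pair_priorities A B) (\<lambda>_. UNIV) \<sigma>"
    using common_tree_if_eve_wins[OF assms(1-3)] assms(6) by blast
  then obtain P where "adam_wins_positionally (initial_pairs A B) (pair_edge A B) (pair_priorities A B) P"
    using adam_positional_or_eve_wins by blast
  then show ?thesis
    using rejecting_if_adam_wins_positionally by (intro exI[of _ "\<lambda>\<delta>A \<delta>B. P (\<delta>A, \<delta>B)"]) blast
qed

end
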